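(* Let $R$ be a commutative ring with identity, $I,J$ ideals of $R$, and $M$ a progenerator $R$-module (a finitely generated projective generator of the category of $R$-modules). If $M$ is $I$-coreduced, then $M$ is $I$-reduced. If $M$ is $(I,J)$-coprime, then $M$ is $(I,J)$-prime.
   Context: All rings are commutative with identity and modules are unital. An $R$-module $M$ is $I$-reduced if for all $m\in M$, $I^2m=0$ implies $Im=0$; $I$-coreduced if $IM=I^2M$; $(I,J)$-prime if for all $m\in M$, $IJm=0$ implies $Im=0$ or $Jm=0$; $(I,J)$-coprime if $IJM=IM$ or $IJM=JM$. *)

theory Defs
  imports Complex_Main
begin

text \<open>Modules over a commutative ring R (the type 'a) are given by a scalar
multiplication scale :: 'a => 'b => 'b satisfying the locale module (HOL.Modules);
the module is the whole type 'b.\<close>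

definition is_ideal :: "'a::comm_ring_1 set \<Rightarrow> bool" where
  "is_ideal I \<longleftrightarrow> module.subspace ((*) :: 'a \<Rightarrow> 'a \<Rightarrow> 'a) I"

definition ideal_mult :: "'a::comm_ring_1 set \<Rightarrow> 'a set \<Rightarrow> 'a set" where
  "ideal_mult I J = module.span ((*) :: 'a \<Rightarrow> 'a \<Rightarrow> 'a) {a * b | a b. a \<in> I \<and> b \<in> J}"

definition ideal_smult :: "('a::comm_ring_1 \<Rightarrow> 'b::ab_group_add \<Rightarrow> 'b) \<Rightarrow> 'a set \<Rightarrow> 'b set" where
  "ideal_smult scale I = module.span scale {scale r m | r m. r \<in> I}"

definition ann_by :: "('a::comm_ring_1 \<Rightarrow> 'b::ab_group_add \<Rightarrow> 'b) \<Rightarrow> 'a set \<Rightarrow> 'b \<Rightarrow> bool" where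
  "ann_by scale I m \<longleftrightarrow> (\<forall>r\<in>I. scale r m = 0)"

definition I_reduced :: "('a::comm_ring_1 \<Rightarrow> 'b::ab_group_add \<Rightarrow> 'b) \<Rightarrow> 'a set \<Rightarrow> bool" where
  "I_reduced scale I \<longleftrightarrow>
     (\<forall>m. ann_by scale (ideal_mult I I) m \<longrightarrow> ann_by scale I m)"

definition I_coreduced :: "('a::comm_ring_1 \<Rightarrow> 'b::ab_group_add \<Rightarrow> 'b) \<Rightarrow> 'a set \<Rightarrow> bool" where
  "I_coreduced scale I \<longleftrightarrow> ideal_smult scale I = ideal_smult scale (ideal_mult I I)"

definition IJ_prime :: "('a::comm_ring_1 \<Rightarrow> 'b::ab_group_add \<Rightarrow> 'b) \<Rightarrow> 'a set \<Rightarrow> 'a set \<Rightarrow> bool" where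
  "IJ_prime scale I J \<longleftrightarrow>
     (\<forall>m. ann_by scale (ideal_mult I J) m \<longrightarrow> ann_by scale I m \<or> ann_by scale J m)"

definition IJ_coprime :: "('a::comm_ring_1 \<Rightarrow> 'b::ab_group_add \<Rightarrow> 'b) \<Rightarrow> 'a set \<Rightarrow> 'a set \<Rightarrow> bool" where
  "IJ_coprime scale I J \<longleftrightarrow>
     ideal_smult scale (ideal_mult I J) = ideal_smult scale I \<or>
     ideal_smult scale (ideal_mult I J) = ideal_smult scale J"

definition finitely_generated :: "('a::comm_ring_1 \<Rightarrow> 'b::ab_group_add \<Rightarrow> 'b) \<Rightarrow> bool" where
  "finitely_generated scale \<longleftrightarrow> (\<exists>S. finite S \<and> module.span scale S = UNIV)"

text \<open>M is (isomorphic to) a direct summand of a finitely generated free module R^n: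
  there are R-linear maps p : R^n -> M, i : M -> R^n with p o i = id. Writing
  i m = (phi_0 m, ..., phi_(n-1) m) and x_k = p(e_k) this says exactly the following.\<close>
definition summand_of_fg_free :: "('a::comm_ring_1 \<Rightarrow> 'b::ab_group_add \<Rightarrow> 'b) \<Rightarrow> bool" where
  "summand_of_fg_free scale \<longleftrightarrow>
     (\<exists>(n::nat) (x::nat \<Rightarrow> 'b) (\<phi>::nat \<Rightarrow> 'b \<Rightarrow> 'a).
        (\<forall>k<n. module_hom scale (*) (\<phi> k)) \<and>
        (\<forall>m. m = (\<Sum>k<n. scale (\<phi> k m) (x k))))"

text \<open>M is a generator: the images of all R-linear maps M -> R generate R
  (i.e. R, and hence every module, is an epimorphic image of a direct sum of copies of M).\<close>
definition is_generator :: "('a::comm_ring_1 \<Rightarrow> 'b::ab_group_add \<Rightarrow> 'b) \<Rightarrow> bool" where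
  "is_generator scale \<longleftrightarrow>
     module.span ((*) :: 'a \<Rightarrow> 'a \<Rightarrow> 'a) (\<Union>{range f | f. module_hom scale (*) f}) = UNIV"

definition progenerator :: "('a::comm_ring_1 \<Rightarrow> 'b::ab_group_add \<Rightarrow> 'b) \<Rightarrow> bool" where
  "progenerator scale \<longleftrightarrow>
     finitely_generated scale \<and> summand_of_fg_free scale \<and> is_generator scale"

end

theory Submission
  imports Defs
begin

text \<open>Every linear form f : M \<rightarrow> R maps KM
  into K for an ideal K, so IM \<subseteq> KM gives a f(m) = f(a m) \<in> K for all a \<in> I; as the values
  f(m) generate R, this forces I \<subseteq> K. Hence IM = I I M gives I \<subseteq> I I, and IJM = IM or IJM = JM
  gives I \<subseteq> IJ or J \<subseteq> IJ, from which reducedness and primeness are immediate.\<close>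

lemma module_mult: "module ((*) :: 'a::comm_ring_1 \<Rightarrow> 'a \<Rightarrow> 'a)"
  by unfold_locales (auto simp: algebra_simps)

lemma is_ideal_ideal_mult: "is_ideal (ideal_mult I J)"
proof -
  interpret R: module "(*) :: 'a \<Rightarrow> 'a \<Rightarrow> 'a" by (rule module_mult)
  show ?thesis unfolding is_ideal_def ideal_mult_def by simp
qed

lemma ideal_mult_commute: "ideal_mult J I = ideal_mult I J"
proof -
  have "{a * b | a b. a \<in> J \<and> b \<in> I} = {a * b | a b. a \<in> I \<and> b \<in> J}"
    using mult.commute by blast
  then show ?thesis unfolding ideal_mult_def by simp
qed

lemma ann_by_subset: "A \<subseteq> B \<Longrightarrow> ann_by scale B m \<Longrightarrow> ann_by scale A m"
  unfolding ann_by_def by blast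

lemma linear_form_image_ideal_smult:
  fixes scale :: "'a::comm_ring_1 \<Rightarrow> 'b::ab_group_add \<Rightarrow> 'b"
  assumes f: "module_hom scale (*) f" and K: "is_ideal K"
  shows "f ` ideal_smult scale K \<subseteq> K"
proof -
  interpret f: module_hom scale "(*)" f by (rule f)
  have "f ` {scale r m | r m. r \<in> K} \<subseteq> K"
    using K f.m2.subspace_scale by (auto simp: is_ideal_def f.scale mult.commute)
  then have "f.m2.span (f ` {scale r m | r m. r \<in> K}) \<subseteq> K"
    using K unfolding is_ideal_def by (rule f.m2.span_minimal)
  then show ?thesis by (simp add: ideal_smult_def f.span_image)
qed

lemma generator_ideal_smult_subset_iff:
  fixes scale :: "'a::comm_ring_1 \<Rightarrow> 'b::ab_group_add \<Rightarrow> 'b"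
  assumes M: "module scale" and G: "is_generator scale" and K: "is_ideal K"
  shows "ideal_smult scale I \<subseteq> ideal_smult scale K \<longleftrightarrow> I \<subseteq> K"
proof
  interpret M: module scale by (rule M)
  interpret R: module "(*) :: 'a \<Rightarrow> 'a \<Rightarrow> 'a" by (rule module_mult)
  assume IK: "ideal_smult scale I \<subseteq> ideal_smult scale K"
  show "I \<subseteq> K"
  proof
    fix a assume "a \<in> I"
    define T where "T = \<Union>{range f | f. module_hom scale (*) f}"
    have "a * y \<in> K" if "y \<in> T" for y
    proof -
      obtain f m where f: "module_hom scale (*) f" and y: "y = f m"
        using \<open>y \<in> T\<close> unfolding T_def by blast
      have "scale a m \<in> ideal_smult scale I"
        unfolding ideal_smult_def using \<open>a \<in> I\<close> by (intro M.span_base) blast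
      then have "f (scale a m) \<in> K"
        using linear_form_image_ideal_smult[OF f K] IK by blast
      then show "a * y \<in> K" by (simp add: y module_hom.scale[OF f])
    qed
    then have "(*) a ` T \<subseteq> K" by blast
    then have "R.span ((*) a ` T) \<subseteq> K"
      using K unfolding is_ideal_def by (rule R.span_minimal)
    moreover have "R.span ((*) a ` T) = (*) a ` R.span T"
      by (rule module_hom.span_image[OF R.module_hom_scale_self])
    moreover have "R.span T = UNIV"
      using G unfolding is_generator_def T_def .
    ultimately show "a \<in> K" by (metis image_subset_iff mult_1_right UNIV_I)
  qed
next
  show "I \<subseteq> K \<Longrightarrow> ideal_smult scale I \<subseteq> ideal_smult scale K"
    unfolding ideal_smult_def by (rule module.span_mono[OF M]) blast
qed

lemma I_reduced_if_I_coreduced: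
  assumes "module scale" and "is_generator scale" and "I_coreduced scale I"
  shows "I_reduced scale I"
proof -
  have "I \<subseteq> ideal_mult I I"
    using assms generator_ideal_smult_subset_iff[OF _ _ is_ideal_ideal_mult]
    unfolding I_coreduced_def by blast
  then show ?thesis unfolding I_reduced_def by (blast intro: ann_by_subset)
qed

lemma IJ_prime_if_IJ_coprime:
  assumes "module scale" and "is_generator scale" and "IJ_coprime scale I J"
  shows "IJ_prime scale I J"
proof -
  have "I \<subseteq> ideal_mult I J \<or> J \<subseteq> ideal_mult J I"
    using assms generator_ideal_smult_subset_iff[OF _ _ is_ideal_ideal_mult]
    unfolding IJ_coprime_def ideal_mult_commute[of J I] by blast
  then show ?thesis
    unfolding IJ_prime_def ideal_mult_commute[of J I] by (blast intro: ann_by_subset)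
qed

theorem mainTheorem8:
  fixes scale :: "'a::comm_ring_1 \<Rightarrow> 'b::ab_group_add \<Rightarrow> 'b"
    and I J :: "'a set"
  assumes "module scale"
    and "is_ideal I" and "is_ideal J"
    and "progenerator scale"
  shows "(I_coreduced scale I \<longrightarrow> I_reduced scale I) \<and>
         (IJ_coprime scale I J \<longrightarrow> IJ_prime scale I J)"
proof -
  have "is_generator scale"
    using \<open>progenerator scale\<close> unfolding progenerator_def by simp
  then show ?thesis
    using \<open>module scale\<close> I_reduced_if_I_coreduced IJ_prime_if_IJ_coprime by blast
qed

end
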